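(* In the setting and construction described in the context, with $M_{s,t}=(1+R(4,R(4,s)))^{t-2}$: (1) $|S_{t-1}|\le M_{s,t}$ (a constant depending only on $s$ and $t$); (2) $V\setminus(S_{t-1}\cup N(S_{t-1}))=\emptyset$, i.e. $S_{t-1}$ is a dominating set of $G$.
   Context: All graphs are finite and simple. $P_t$ is the path on $t$ vertices; $K_4$ is the complete graph on $4$ vertices; $SDK_s$ is the one-subdivision of $K_{1,s}$ (replace each edge $uv$ of the star $K_{1,s}$ by a path $u w v$ through a new vertex $w$). A graph is $\mathcal{H}$-free if it has no induced subgraph isomorphic to a member of $\mathcal{H}$. $R(k,l)$ denotes the Ramsey number: the least integer such that every graph on at least $R(k,l)$ vertices contains a clique on $k$ vertices or a stable set on $l$ vertices. For $X\subseteq V$, $N(X)=\bigcup_{v\in X}N(v)$. A set $D\subseteq V$ is dominating if every vertex outside $D$ has a neighbor in $D$. Setting: $s,t$ are positive integers with $t\ge 2$, and $G=(V,E)$ is a connected $(P_t,SDK_s,K_4)$-free graph. Fix a vertex $a\in V$, and set $S_1=\{a\}$. For $i=1,2,\dots,t-2$ define $S_{i+1}$ as follows: let $B_i=N(S_i)$ and $W_i=V\setminus(B_i\cup S_i)$; enumerate $S_i=\{v_1,\dots,v_{|S_i|}\}$ and for $j=1,\dots,|S_i|$ let $B_i^j=\{v\in B_i\setminus\bigcup_{k<j}B_i^k : v\text{ is adjacent to }v_j\}$ (so $B_i=\bigcup_j B_i^j$); for each $j$ let $X_i^j\subseteq B_i^j$ be an inclusion-minimal set such that every $w\in W_i$ with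 $N(w)\cap B_i^j\neq\emptyset$ satisfies $N(w)\cap X_i^j\ne\emptyset$; let $X_i=\bigcup_j X_i^j$ and $S_{i+1}=S_i\cup X_i$. The choices of enumeration and of minimal sets are arbitrary. *)

theory Defs
  imports Main
begin

definition simple_graph :: "'a set \<Rightarrow> ('a \<Rightarrow> 'a \<Rightarrow> bool) \<Rightarrow> bool" where
  "simple_graph V E \<longleftrightarrow> finite V \<and> (\<forall>x y. E x y \<longrightarrow> E y x) \<and> (\<forall>x. \<not> E x x)
     \<and> (\<forall>x y. E x y \<longrightarrow> x \<in> V \<and> y \<in> V)"

definition connected_graph :: "'a set \<Rightarrow> ('a \<Rightarrow> 'a \<Rightarrow> bool) \<Rightarrow> bool" where
  "connected_graph V E \<longleftrightarrow> V \<noteq> {} \<and> (\<forall>x\<in>V. \<forall>y\<in>V. (\<lambda>u v. E u v \<and> u \<in> V \<and> v \<in> V)\<^sup>*\<^sup>* x y)"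

definition has_induced :: "'a set \<Rightarrow> ('a \<Rightarrow> 'a \<Rightarrow> bool) \<Rightarrow> nat \<Rightarrow> (nat \<Rightarrow> nat \<Rightarrow> bool) \<Rightarrow> bool" where
  "has_induced V E n H \<longleftrightarrow> (\<exists>f. inj_on f {0..<n} \<and> f ` {0..<n} \<subseteq> V \<and>
      (\<forall>i<n. \<forall>j<n. i \<noteq> j \<longrightarrow> (E (f i) (f j) \<longleftrightarrow> H i j)))"

definition path_graph :: "nat \<Rightarrow> nat \<Rightarrow> bool" where
  "path_graph i j \<longleftrightarrow> i = Suc j \<or> j = Suc i"

definition complete_graph :: "nat \<Rightarrow> nat \<Rightarrow> bool" where
  "complete_graph i j \<longleftrightarrow> i \<noteq> j"

text \<open>SDK_s on 2s+1 vertices: centre 0, subdivision vertices 1..s, leaves s+1..2s;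
  edges 0--i and i--(i+s) for 1 \<le> i \<le> s.\<close>
definition sdk_graph :: "nat \<Rightarrow> nat \<Rightarrow> nat \<Rightarrow> bool" where
  "sdk_graph s i j \<longleftrightarrow>
     (i = 0 \<and> 1 \<le> j \<and> j \<le> s) \<or> (j = 0 \<and> 1 \<le> i \<and> i \<le> s) \<or>
     (1 \<le> i \<and> i \<le> s \<and> j = i + s) \<or> (1 \<le> j \<and> j \<le> s \<and> i = j + s)"

definition P_SDK_K4_free :: "nat \<Rightarrow> nat \<Rightarrow> 'a set \<Rightarrow> ('a \<Rightarrow> 'a \<Rightarrow> bool) \<Rightarrow> bool" where
  "P_SDK_K4_free s t V E \<longleftrightarrow>
     \<not> has_induced V E t path_graph \<and> \<not> has_induced V E (2 * s + 1) (sdk_graph s)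
     \<and> \<not> has_induced V E 4 complete_graph"

definition ramsey_prop :: "nat \<Rightarrow> nat \<Rightarrow> nat \<Rightarrow> bool" where
  "ramsey_prop k l n \<longleftrightarrow> (\<forall>m\<ge>n. \<forall>F :: nat \<Rightarrow> nat \<Rightarrow> bool.
      (\<forall>x y. F x y \<longrightarrow> F y x) \<and> (\<forall>x. \<not> F x x) \<longrightarrow>
      (\<exists>K\<subseteq>{0..<m}. card K = k \<and> (\<forall>x\<in>K. \<forall>y\<in>K. x \<noteq> y \<longrightarrow> F x y)) \<or>
      (\<exists>I\<subseteq>{0..<m}. card I = l \<and> (\<forall>x\<in>I. \<forall>y\<in>I. \<not> F x y)))"

definition ramsey :: "nat \<Rightarrow> nat \<Rightarrow> nat" where
  "ramsey k l = (LEAST n. ramsey_prop k l n)"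

definition nbhd :: "('a \<Rightarrow> 'a \<Rightarrow> bool) \<Rightarrow> 'a set \<Rightarrow> 'a set" where
  "nbhd E X = {v. \<exists>x\<in>X. E x v}"

primrec blocks :: "('a \<Rightarrow> 'a \<Rightarrow> bool) \<Rightarrow> 'a set \<Rightarrow> 'a list \<Rightarrow> nat \<Rightarrow> 'a set list" where
  "blocks E B vs 0 = []"
| "blocks E B vs (Suc j) = blocks E B vs j @ [{v \<in> B - \<Union>(set (blocks E B vs j)). E v (vs ! j)}]"

definition covers :: "('a \<Rightarrow> 'a \<Rightarrow> bool) \<Rightarrow> 'a set \<Rightarrow> 'a set \<Rightarrow> 'a set \<Rightarrow> bool" where
  "covers E W Bj X \<longleftrightarrow> (\<forall>w\<in>W. (\<exists>b\<in>Bj. E w b) \<longrightarrow> (\<exists>x\<in>X. E w x))"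

definition minimal_cover :: "('a \<Rightarrow> 'a \<Rightarrow> bool) \<Rightarrow> 'a set \<Rightarrow> 'a set \<Rightarrow> 'a set \<Rightarrow> bool" where
  "minimal_cover E W Bj X \<longleftrightarrow> X \<subseteq> Bj \<and> covers E W Bj X \<and>
     (\<forall>Y. Y \<subset> X \<longrightarrow> \<not> covers E W Bj Y)"

text \<open>One step S_i \<mapsto> S_{i+1} of the construction (with some enumeration and some
  choice of minimal sets).\<close>
definition constr_step :: "'a set \<Rightarrow> ('a \<Rightarrow> 'a \<Rightarrow> bool) \<Rightarrow> 'a set \<Rightarrow> 'a set \<Rightarrow> bool" where
  "constr_step V E Si Snext \<longleftrightarrow>
    (let B = nbhd E Si; W = V - (B \<union> Si) in
     \<exists>vs Xs. distinct vs \<and> set vs = Si \<and> length Xs = length vs \<and>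
       (\<forall>j<length vs. minimal_cover E W (blocks E B vs (length vs) ! j) (Xs ! j)) \<and>
       Snext = Si \<union> \<Union>(set Xs))"

end

theory Submission
  imports Defs "HOL-Library.Ramsey"
begin

text \<open>
  Minimality of the cover chosen for a vertex \<open>v \<in> S\<^sub>i\<close> gives each of its elements a private
  neighbour outside \<open>S\<^sub>i \<union> N(S\<^sub>i)\<close>. Two applications of Ramsey's theorem in the
  \<open>K\<^sub>4\<close>-free graph extract \<open>s\<close> cover elements and their private neighbours, which together
  with \<open>v\<close> induce \<open>SDK\<^sub>s\<close>; hence each cover has fewer than \<open>R(4,R(4,s))\<close> elements and
  \<open>|S\<^sub>i\<^sub>+\<^sub>1| \<le> (1 + R(4,R(4,s))) |S\<^sub>i|\<close>.

  For domination, a vertex \<open>u\<close> outside \<open>S\<^sub>k \<union> N(S\<^sub>k)\<close> adjacent to \<open>y \<in> N(S\<^sub>k)\<close> is the end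
  of an induced path \<open>q\<^sub>1 \<dots> q\<^sub>k y u\<close> with all \<open>q\<^sub>i \<in> S\<^sub>k\<close>: the covers at step \<open>k - 1\<close> force
  \<open>y\<close> to be adjacent only to the newest layer, and the path is built backwards layer by
  layer. A vertex not dominated by \<open>S\<^sub>t\<^sub>-\<^sub>1\<close> would, by connectivity, give an induced path
  on \<open>t + 1\<close> vertices.
\<close>

definition is_clique :: "('a \<Rightarrow> 'a \<Rightarrow> bool) \<Rightarrow> 'a set \<Rightarrow> bool" where
  "is_clique E K \<longleftrightarrow> (\<forall>x\<in>K. \<forall>y\<in>K. x \<noteq> y \<longrightarrow> E x y)"

definition is_stable :: "('a \<Rightarrow> 'a \<Rightarrow> bool) \<Rightarrow> 'a set \<Rightarrow> bool" where
  "is_stable E I \<longleftrightarrow> (\<forall>x\<in>I. \<forall>y\<in>I. x \<noteq> y \<longrightarrow> \<not> E x y)"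

lemma simple_graph_sym: "simple_graph V E \<Longrightarrow> E x y \<Longrightarrow> E y x"
  and simple_graph_irrefl: "simple_graph V E \<Longrightarrow> \<not> E x x"
  and simple_graph_edge_in: "simple_graph V E \<Longrightarrow> E x y \<Longrightarrow> x \<in> V \<and> y \<in> V"
  and simple_graph_finite: "simple_graph V E \<Longrightarrow> finite V"
  unfolding simple_graph_def by blast+

lemma nbhd_subset: "simple_graph V E \<Longrightarrow> nbhd E X \<subseteq> V"
  unfolding nbhd_def by (auto dest: simple_graph_edge_in)

lemma nbhd_mono: "X \<subseteq> Y \<Longrightarrow> nbhd E X \<subseteq> nbhd E Y"
  unfolding nbhd_def by blast

lemma ramsey_prop_ramsey: "ramsey_prop k l (ramsey k l)"
proof -
  obtain r where r: "\<forall>(A::nat set) (F::nat set set). finite A \<and> r \<le> card A \<longrightarrow>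
      (\<exists>R\<subseteq>A. card R = k \<and> clique R F \<or> card R = l \<and> indep R F)"
    using ramsey2[of k l] by blast
  have "ramsey_prop k l r"
    unfolding ramsey_prop_def
  proof (intro allI impI)
    fix m and F :: "nat \<Rightarrow> nat \<Rightarrow> bool"
    assume "r \<le> m" and F: "(\<forall>x y. F x y \<longrightarrow> F y x) \<and> (\<forall>x. \<not> F x x)"
    define edges where "edges = {{x, y} | x y. F x y}"
    have edge_iff: "{x, y} \<in> edges \<longleftrightarrow> F x y" for x y
      using F unfolding edges_def by (auto simp: doubleton_eq_iff)
    from r \<open>r \<le> m\<close> obtain R where "R \<subseteq> {0..<m}"
      and "card R = k \<and> clique R edges \<or> card R = l \<and> indep R edges"
      by (metis card_atLeastLessThan diff_zero finite_atLeastLessThan)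
    then show "(\<exists>K\<subseteq>{0..<m}. card K = k \<and> (\<forall>x\<in>K. \<forall>y\<in>K. x \<noteq> y \<longrightarrow> F x y)) \<or>
        (\<exists>I\<subseteq>{0..<m}. card I = l \<and> (\<forall>x\<in>I. \<forall>y\<in>I. \<not> F x y))"
      using F unfolding clique_def indep_def edge_iff by metis
  qed
  then show ?thesis
    unfolding ramsey_def by (rule LeastI)
qed

lemma is_clique_image: "inj_on h K \<Longrightarrow> is_clique R (h ` K) \<longleftrightarrow> is_clique (\<lambda>x y. R (h x) (h y)) K"
  and is_stable_image: "inj_on h K \<Longrightarrow> is_stable R (h ` K) \<longleftrightarrow> is_stable (\<lambda>x y. R (h x) (h y)) K"
  unfolding is_clique_def is_stable_def inj_on_def by (simp_all add: ball_simps) metis+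

lemma ramsey_finite_set:
  assumes "finite A" and "ramsey k l \<le> card A" and sym: "\<And>x y. R x y \<Longrightarrow> R y x"
  shows "(\<exists>K\<subseteq>A. card K = k \<and> is_clique R K) \<or> (\<exists>I\<subseteq>A. card I = l \<and> is_stable R I)"
proof -
  obtain h where h: "bij_betw h {0..<card A} A"
    using ex_bij_betw_nat_finite[OF \<open>finite A\<close>] by blast
  define F where "F x y \<longleftrightarrow> x \<noteq> y \<and> R (h x) (h y)" for x y
  have "(\<forall>x y. F x y \<longrightarrow> F y x) \<and> (\<forall>x. \<not> F x x)"
    using sym unfolding F_def by blast
  with ramsey_prop_ramsey[of k l] assms(2) obtain K
    where K: "K \<subseteq> {0..<card A}"
      and "card K = k \<and> is_clique F K \<or> card K = l \<and> (\<forall>x\<in>K. \<forall>y\<in>K. \<not> F x y)"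
    unfolding ramsey_prop_def is_clique_def by blast
  then have "card K = k \<and> is_clique (\<lambda>x y. R (h x) (h y)) K
      \<or> card K = l \<and> is_stable (\<lambda>x y. R (h x) (h y)) K"
    unfolding is_clique_def is_stable_def F_def by blast
  moreover have "inj_on h K" and "h ` K \<subseteq> A"
    using K h by (auto simp: bij_betw_def intro: inj_on_subset)
  moreover from \<open>inj_on h K\<close> have "card (h ` K) = card K"
    by (rule card_image)
  ultimately show ?thesis
    using is_clique_image[of h K R] is_stable_image[of h K R] by blast
qed

lemma clique_has_induced_complete:
  assumes "finite K" and "K \<subseteq> V" and "card K = n" and clique: "is_clique E K"
  shows "has_induced V E n complete_graph"
proof -
  obtain h where "bij_betw h {0..<n} K"
    using ex_bij_betw_nat_finite[OF \<open>finite K\<close>] \<open>card K = n\<close> by blast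
  then have inj: "inj_on h {0..<n}" and img: "h ` {0..<n} = K"
    by (simp_all add: bij_betw_def)
  have "E (h i) (h j) \<longleftrightarrow> complete_graph i j" if "i < n" "j < n" "i \<noteq> j" for i j
  proof -
    have "h i \<noteq> h j"
      using inj_onD[OF inj] that by auto
    moreover have "h i \<in> K" "h j \<in> K"
      using img that by auto
    ultimately show ?thesis
      using clique that(3) unfolding is_clique_def complete_graph_def by blast
  qed
  with inj img \<open>K \<subseteq> V\<close> show ?thesis
    unfolding has_induced_def by (intro exI[of _ h]) simp
qed

lemma K4_free_stable_subset:
  assumes sg: "simple_graph V E" and noK4: "\<not> has_induced V E 4 complete_graph"
    and "A \<subseteq> V" and "ramsey 4 l \<le> card A"
  obtains I where "I \<subseteq> A" and "card I = l" and "is_stable E I"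
proof -
  have "finite A"
    using finite_subset[OF \<open>A \<subseteq> V\<close> simple_graph_finite[OF sg]] .
  then have "(\<exists>K\<subseteq>A. card K = 4 \<and> is_clique E K) \<or> (\<exists>I\<subseteq>A. card I = l \<and> is_stable E I)"
    by (rule ramsey_finite_set[OF _ \<open>ramsey 4 l \<le> card A\<close>]) (erule simple_graph_sym[OF sg])
  then show thesis
  proof (elim disjE exE conjE)
    fix K assume "K \<subseteq> A" "card K = 4" "is_clique E K"
    then have "has_induced V E 4 complete_graph"
      using clique_has_induced_complete[OF finite_subset[OF _ \<open>finite A\<close>] subset_trans[OF _ \<open>A \<subseteq> V\<close>]]
      by blast
    with noK4 show thesis ..
  qed (rule that)
qed

lemma sdk_graph_vertex_cases [consumes 1, case_names centre middle leaf]: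
  assumes "i < 2 * s + 1"
  obtains "i = 0" | k where "k < s" and "i = Suc k" | k where "k < s" and "i = Suc (s + k)"
proof -
  consider "i = 0" | "1 \<le> i" "i \<le> s" | "s < i" by linarith
  then show thesis
    using assms that by cases (auto dest!: less_imp_Suc_add Suc_le_D)
qed

lemma has_induced_sdk_graph:
  assumes sg: "simple_graph V E" and "c \<in> V"
    and xs: "distinct xs" "length xs = s"
    and centre_adj: "\<forall>x\<in>set xs. E c x"
    and middle_stable: "is_stable E (set xs)"
    and leaf_adj: "\<forall>x\<in>set xs. \<forall>y\<in>set xs. E (p x) y \<longleftrightarrow> x = y"
    and leaves_stable: "is_stable E (p ` set xs)"
    and leaves_far: "\<forall>x\<in>set xs. p x \<noteq> c \<and> \<not> E c (p x)"
  shows "has_induced V E (2 * s + 1) (sdk_graph s)"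
proof -
  note sym = simple_graph_sym[OF sg]
  define f where
    "f i = (if i = 0 then c else if i \<le> s then xs ! (i - 1) else p (xs ! (i - s - 1)))" for i
  have f_simps: "f 0 = c" "k < s \<Longrightarrow> f (Suc k) = xs ! k" "f (Suc (s + k)) = p (xs ! k)" for k
    unfolding f_def by auto
  have sdk_simps: "k < s \<Longrightarrow> sdk_graph s 0 (Suc k)" "k < s \<Longrightarrow> sdk_graph s (Suc k) 0"
    "\<not> sdk_graph s 0 (Suc (s + k))" "\<not> sdk_graph s (Suc (s + k)) 0"
    "k < s \<Longrightarrow> l < s \<Longrightarrow> \<not> sdk_graph s (Suc k) (Suc l)"
    "k < s \<Longrightarrow> l < s \<Longrightarrow> sdk_graph s (Suc k) (Suc (s + l)) \<longleftrightarrow> k = l"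
    "k < s \<Longrightarrow> l < s \<Longrightarrow> sdk_graph s (Suc (s + l)) (Suc k) \<longleftrightarrow> k = l"
    "k < s \<Longrightarrow> l < s \<Longrightarrow> \<not> sdk_graph s (Suc (s + k)) (Suc (s + l))" for k l
    unfolding sdk_graph_def by auto
  have x_mem: "k < s \<Longrightarrow> xs ! k \<in> set xs" for k
    using xs(2) by simp
  have x_eq: "k < s \<Longrightarrow> l < s \<Longrightarrow> xs ! k = xs ! l \<longleftrightarrow> k = l" for k l
    using xs by (simp add: nth_eq_iff_index_eq)
  have p_eq: "k < s \<Longrightarrow> l < s \<Longrightarrow> p (xs ! k) = p (xs ! l) \<longleftrightarrow> k = l" for k l
    using leaf_adj x_mem x_eq by metis
  have vertex_distinct: "k < s \<Longrightarrow> c \<noteq> xs ! k" "k < s \<Longrightarrow> c \<noteq> p (xs ! k)"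
    "k < s \<Longrightarrow> l < s \<Longrightarrow> p (xs ! l) \<noteq> xs ! k" for k l
    using x_mem centre_adj leaf_adj leaves_far middle_stable simple_graph_irrefl[OF sg]
    unfolding is_stable_def by metis+
  have adj_simps: "k < s \<Longrightarrow> E c (xs ! k)" "k < s \<Longrightarrow> E (xs ! k) c"
    "k < s \<Longrightarrow> \<not> E c (p (xs ! k))" "k < s \<Longrightarrow> \<not> E (p (xs ! k)) c"
    "k < s \<Longrightarrow> l < s \<Longrightarrow> E (p (xs ! k)) (xs ! l) \<longleftrightarrow> k = l"
    "k < s \<Longrightarrow> l < s \<Longrightarrow> E (xs ! l) (p (xs ! k)) \<longleftrightarrow> k = l"
    "k < s \<Longrightarrow> l < s \<Longrightarrow> k \<noteq> l \<Longrightarrow> \<not> E (xs ! k) (xs ! l)"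
    "k < s \<Longrightarrow> l < s \<Longrightarrow> k \<noteq> l \<Longrightarrow> \<not> E (p (xs ! k)) (p (xs ! l))" for k l
    using x_mem x_eq p_eq centre_adj leaf_adj leaves_far middle_stable leaves_stable sym
    unfolding is_stable_def by (metis image_eqI)+
  have "inj_on f {0..<2 * s + 1}"
  proof (rule inj_onI)
    fix i j assume "i \<in> {0..<2 * s + 1}" "j \<in> {0..<2 * s + 1}" and "f i = f j"
    then have i: "i < 2 * s + 1" and j: "j < 2 * s + 1" and "f i = f j"
      by simp_all
    then show "i = j"
      by (cases rule: sdk_graph_vertex_cases[OF i]; cases rule: sdk_graph_vertex_cases[OF j])
        (auto simp: f_simps x_eq p_eq vertex_distinct vertex_distinct(3)[THEN not_sym])
  qed
  moreover have "f ` {0..<2 * s + 1} \<subseteq> V"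
  proof (rule image_subsetI)
    have in_V: "xs ! k \<in> V" "p (xs ! k) \<in> V" if "k < s" for k
      using adj_simps(1)[OF that] adj_simps(5)[OF that that] simple_graph_edge_in[OF sg] by blast+
    fix i assume "i \<in> {0..<2 * s + 1}"
    then have "i < 2 * s + 1"
      by simp
    then show "f i \<in> V"
      by (cases rule: sdk_graph_vertex_cases) (simp_all add: f_simps in_V \<open>c \<in> V\<close>)
  qed
  moreover have "E (f i) (f j) \<longleftrightarrow> sdk_graph s i j"
    if "i < 2 * s + 1" "j < 2 * s + 1" "i \<noteq> j" for i j
    using that
    by (cases rule: sdk_graph_vertex_cases[OF that(1)]; cases rule: sdk_graph_vertex_cases[OF that(2)])
      (auto simp: f_simps adj_simps sdk_simps)
  ultimately show ?thesis
    unfolding has_induced_def by blast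
qed

lemma private_neighbours_card_less:
  assumes sg: "simple_graph V E" and noK4: "\<not> has_induced V E 4 complete_graph"
    and noSDK: "\<not> has_induced V E (2 * s + 1) (sdk_graph s)"
    and "c \<in> V" and "X \<subseteq> V" and centre_adj: "\<forall>x\<in>X. E c x"
    and p: "\<forall>x\<in>X. E (p x) x \<and> (\<forall>y\<in>X. E (p x) y \<longrightarrow> y = x) \<and> p x \<noteq> c \<and> \<not> E c (p x)"
  shows "card X < ramsey 4 (ramsey 4 s)"
proof (rule ccontr)
  assume "\<not> ?thesis"
  then have "ramsey 4 (ramsey 4 s) \<le> card X"
    by simp
  then obtain I where "I \<subseteq> X" and card_I: "card I = ramsey 4 s" and "is_stable E I"
    by (rule K4_free_stable_subset[OF sg noK4 \<open>X \<subseteq> V\<close>])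
  have inj: "inj_on p X"
  proof (rule inj_onI)
    fix x y assume "x \<in> X" "y \<in> X" "p x = p y"
    then have "E (p x) y"
      using p by simp
    with p \<open>x \<in> X\<close> \<open>y \<in> X\<close> show "x = y"
      by blast
  qed
  have "p ` I \<subseteq> V"
    using p \<open>I \<subseteq> X\<close> simple_graph_edge_in[OF sg] by blast
  moreover have "card (p ` I) = ramsey 4 s"
    using card_image[OF inj_on_subset[OF inj \<open>I \<subseteq> X\<close>]] card_I by simp
  ultimately obtain L where "L \<subseteq> p ` I" and "card L = s" and "is_stable E L"
    using K4_free_stable_subset[OF sg noK4, of "p ` I" s] by auto
  define J where "J = {x \<in> I. p x \<in> L}"
  have "J \<subseteq> X" and p_J: "p ` J = L"
    using \<open>I \<subseteq> X\<close> \<open>L \<subseteq> p ` I\<close> unfolding J_def by auto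
  have "finite J"
    using finite_subset[OF \<open>J \<subseteq> X\<close>] finite_subset[OF \<open>X \<subseteq> V\<close> simple_graph_finite[OF sg]] .
  then obtain xs where "set xs = J" and "distinct xs"
    using finite_distinct_list by blast
  have "length xs = s"
    using distinct_card[OF \<open>distinct xs\<close>] card_image[OF inj_on_subset[OF inj \<open>J \<subseteq> X\<close>]]
      \<open>set xs = J\<close> p_J \<open>card L = s\<close> by simp
  have "has_induced V E (2 * s + 1) (sdk_graph s)"
  proof (rule has_induced_sdk_graph[OF sg \<open>c \<in> V\<close> \<open>distinct xs\<close> \<open>length xs = s\<close>])
    show "\<forall>x\<in>set xs. E c x" and "\<forall>x\<in>set xs. \<forall>y\<in>set xs. E (p x) y \<longleftrightarrow> x = y"
      and "\<forall>x\<in>set xs. p x \<noteq> c \<and> \<not> E c (p x)"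
      using centre_adj p \<open>set xs = J\<close> \<open>J \<subseteq> X\<close> by blast+
    show "is_stable E (set xs)"
      using \<open>is_stable E I\<close> \<open>set xs = J\<close> unfolding is_stable_def J_def by blast
    show "is_stable E (p ` set xs)"
      using \<open>is_stable E L\<close> \<open>set xs = J\<close> p_J by simp
  qed
  with noSDK show False ..
qed

lemma minimal_cover_private_neighbour:
  assumes "minimal_cover E W B X" and "x \<in> X"
  obtains w where "w \<in> W" and "E w x" and "\<forall>y\<in>X. E w y \<longrightarrow> y = x"
proof -
  have "\<not> covers E W B (X - {x})"
    using assms unfolding minimal_cover_def by blast
  then obtain w where "w \<in> W" "\<exists>b\<in>B. E w b" "\<forall>y\<in>X - {x}. \<not> E w y"
    unfolding covers_def by blast
  moreover from this have "\<exists>y\<in>X. E w y"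
    using assms(1) unfolding minimal_cover_def covers_def by blast
  ultimately show thesis
    using that by blast
qed

lemma length_blocks [simp]: "length (blocks E B vs n) = n"
  by (induction n) auto

lemma nth_blocks_subset: "j < n \<Longrightarrow> blocks E B vs n ! j \<subseteq> {v \<in> B. E v (vs ! j)}"
  by (induction n) (auto simp: nth_append less_Suc_eq)

lemma Union_blocks: "\<Union>(set (blocks E B vs n)) = {v \<in> B. \<exists>j<n. E v (vs ! j)}"
  by (induction n) (auto simp: less_Suc_eq)

lemma constr_stepE:
  assumes "constr_step V E S S'"
  obtains vs Xs where "distinct vs" and "set vs = S" and "length Xs = length vs"
    and "\<And>j. j < length vs \<Longrightarrow>
      minimal_cover E (V - (nbhd E S \<union> S)) (blocks E (nbhd E S) vs (length vs) ! j) (Xs ! j)"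
    and "S' = S \<union> \<Union>(set Xs)"
  using assms unfolding constr_step_def Let_def by blast

lemma constr_step_subset: "constr_step V E S S' \<Longrightarrow> S \<subseteq> S'"
  by (erule constr_stepE) simp

lemma constr_step_subset_nbhd:
  assumes "constr_step V E S S'"
  shows "S' \<subseteq> S \<union> nbhd E S"
proof -
  obtain vs Xs where "length Xs = length vs" and S': "S' = S \<union> \<Union>(set Xs)"
    and cover: "\<And>j. j < length vs \<Longrightarrow>
      minimal_cover E (V - (nbhd E S \<union> S)) (blocks E (nbhd E S) vs (length vs) ! j) (Xs ! j)"
    by (rule constr_stepE[OF assms]) blast
  then have "Xs ! j \<subseteq> nbhd E S" if "j < length Xs" for j
    using that nth_blocks_subset[of j "length vs" E "nbhd E S" vs]
    unfolding minimal_cover_def by auto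
  then show ?thesis
    unfolding S' by (force simp: in_set_conv_nth)
qed

lemma constr_step_dominates:
  assumes "constr_step V E S S'" and sym: "\<And>x y. E x y \<Longrightarrow> E y x"
    and "u \<in> V - (nbhd E S \<union> S)" and "y \<in> nbhd E S" and "E u y"
  shows "\<exists>x\<in>S'. E u x"
proof -
  obtain vs Xs where "set vs = S" and "length Xs = length vs" and S': "S' = S \<union> \<Union>(set Xs)"
    and cover: "\<And>j. j < length vs \<Longrightarrow>
      minimal_cover E (V - (nbhd E S \<union> S)) (blocks E (nbhd E S) vs (length vs) ! j) (Xs ! j)"
    by (rule constr_stepE[OF assms(1)]) blast
  have "y \<in> \<Union>(set (blocks E (nbhd E S) vs (length vs)))"
    using \<open>y \<in> nbhd E S\<close> \<open>set vs = S\<close> sym unfolding Union_blocks nbhd_def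
    by (auto simp: in_set_conv_nth) blast
  then obtain j where "j < length vs" and "y \<in> blocks E (nbhd E S) vs (length vs) ! j"
    by (auto simp: in_set_conv_nth)
  with cover[of j] assms(3,5) obtain x where "x \<in> Xs ! j" and "E u x"
    unfolding minimal_cover_def covers_def by blast
  moreover have "Xs ! j \<in> set Xs"
    using \<open>j < length vs\<close> \<open>length Xs = length vs\<close> by simp
  ultimately show ?thesis
    unfolding S' by blast
qed

lemma constr_step_card:
  assumes sg: "simple_graph V E" and noK4: "\<not> has_induced V E 4 complete_graph"
    and noSDK: "\<not> has_induced V E (2 * s + 1) (sdk_graph s)"
    and "constr_step V E S S'" and "S \<subseteq> V"
  shows "card S' \<le> card S * (1 + ramsey 4 (ramsey 4 s))"
proof -
  define R where "R = ramsey 4 (ramsey 4 s)"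
  obtain vs Xs where "distinct vs" "set vs = S" "length Xs = length vs"
    and S': "S' = S \<union> \<Union>(set Xs)"
    and cover: "\<And>j. j < length vs \<Longrightarrow>
      minimal_cover E (V - (nbhd E S \<union> S)) (blocks E (nbhd E S) vs (length vs) ! j) (Xs ! j)"
    by (rule constr_stepE[OF assms(4)]) blast
  have card_X: "card (Xs ! j) \<le> R" if "j < length vs" for j
  proof -
    define c where "c = vs ! j"
    have "c \<in> S"
      using that \<open>set vs = S\<close> unfolding c_def by auto
    have "Xs ! j \<subseteq> blocks E (nbhd E S) vs (length vs) ! j"
      using cover[OF that] unfolding minimal_cover_def by blast
    with nth_blocks_subset[OF that, of E "nbhd E S" vs] have X_adj: "\<forall>x\<in>Xs ! j. E c x"
      using simple_graph_sym[OF sg] unfolding c_def by blast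
    then have "Xs ! j \<subseteq> nbhd E S"
      using \<open>c \<in> S\<close> unfolding nbhd_def by blast
    have "\<exists>w. E w x \<and> (\<forall>y\<in>Xs ! j. E w y \<longrightarrow> y = x) \<and> w \<noteq> c \<and> \<not> E c w"
      if x: "x \<in> Xs ! j" for x
    proof -
      obtain w where "w \<in> V - (nbhd E S \<union> S)" "E w x" "\<forall>y\<in>Xs ! j. E w y \<longrightarrow> y = x"
        using minimal_cover_private_neighbour[OF cover[OF \<open>j < length vs\<close>] x] .
      with \<open>c \<in> S\<close> show ?thesis
        unfolding nbhd_def by blast
    qed
    then obtain p where "\<forall>x\<in>Xs ! j. E (p x) x \<and> (\<forall>y\<in>Xs ! j. E (p x) y \<longrightarrow> y = x)
        \<and> p x \<noteq> c \<and> \<not> E c (p x)"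
      by metis
    moreover have "c \<in> V" and "Xs ! j \<subseteq> V"
      using \<open>c \<in> S\<close> \<open>S \<subseteq> V\<close> \<open>Xs ! j \<subseteq> nbhd E S\<close> nbhd_subset[OF sg] by blast+
    ultimately have "card (Xs ! j) < R"
      unfolding R_def using private_neighbours_card_less[OF sg noK4 noSDK] X_adj by blast
    then show ?thesis
      by simp
  qed
  have "\<Union>(set Xs) = (\<Union>j<length Xs. Xs ! j)"
    by (auto simp: set_conv_nth)
  then have "card (\<Union>(set Xs)) \<le> (\<Sum>j<length Xs. card (Xs ! j))"
    by (simp add: card_UN_le)
  also have "\<dots> \<le> (\<Sum>j<length Xs. R)"
    using card_X \<open>length Xs = length vs\<close> by (intro sum_mono) simp
  also have "\<dots> = card S * R"
    using distinct_card[OF \<open>distinct vs\<close>] \<open>set vs = S\<close> \<open>length Xs = length vs\<close> by simp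
  finally have "card (\<Union>(set Xs)) \<le> card S * R" .
  then show ?thesis
    unfolding S' R_def using card_Un_le[of S "\<Union>(set Xs)"] by simp
qed

definition induced_path :: "('a \<Rightarrow> 'a \<Rightarrow> bool) \<Rightarrow> 'a list \<Rightarrow> bool" where
  "induced_path E ps \<longleftrightarrow> distinct ps \<and>
     (\<forall>i<length ps. \<forall>j<length ps. i \<noteq> j \<longrightarrow> (E (ps ! i) (ps ! j) \<longleftrightarrow> path_graph i j))"

lemma induced_path_singleton: "induced_path E [x]"
  unfolding induced_path_def by simp

lemma induced_path_snoc:
  assumes sym: "\<And>x y. E x y \<Longrightarrow> E y x"
    and "induced_path E ps" and "ps \<noteq> []" and "u \<notin> set ps"
    and u_adj: "\<forall>v\<in>set ps. E v u \<longleftrightarrow> v = last ps"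
  shows "induced_path E (ps @ [u])"
proof -
  let ?n = "length ps"
  have "E (ps ! j) u \<longleftrightarrow> path_graph j ?n" if "j < ?n" for j
  proof -
    have "ps ! j = last ps \<longleftrightarrow> j = ?n - 1"
      using \<open>induced_path E ps\<close> \<open>ps \<noteq> []\<close> that
      by (simp add: induced_path_def last_conv_nth nth_eq_iff_index_eq)
    then show ?thesis
      using u_adj that unfolding path_graph_def by auto
  qed
  note last_adj = this
  have path_graph_sym: "path_graph i j \<longleftrightarrow> path_graph j i" for i j
    unfolding path_graph_def by auto
  show ?thesis
    unfolding induced_path_def
  proof (intro conjI allI impI)
    show "distinct (ps @ [u])"
      using \<open>induced_path E ps\<close> \<open>u \<notin> set ps\<close> by (simp add: induced_path_def)
    fix i j assume "i < length (ps @ [u])" "j < length (ps @ [u])" "i \<noteq> j"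
    then consider "i < ?n" "j < ?n" | "i = ?n" "j < ?n" | "i < ?n" "j = ?n"
      by (auto simp: less_Suc_eq)
    then show "E ((ps @ [u]) ! i) ((ps @ [u]) ! j) \<longleftrightarrow> path_graph i j"
    proof cases
      case 1
      with \<open>induced_path E ps\<close> \<open>i \<noteq> j\<close> show ?thesis
        by (simp add: induced_path_def nth_append)
    next
      case 2
      with last_adj[of j] sym show ?thesis
        by (auto simp: nth_append path_graph_sym)
    next
      case 3
      with last_adj[of i] show ?thesis
        by (simp add: nth_append)
    qed
  qed
qed

lemma induced_path_has_induced:
  assumes "induced_path E ps" and "set ps \<subseteq> V" and "t \<le> length ps"
  shows "has_induced V E t path_graph"
  unfolding has_induced_def
proof (intro exI conjI)
  show "inj_on (nth ps) {0..<t}"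
    using assms(1,3) unfolding induced_path_def by (intro inj_on_nth) auto
  show "nth ps ` {0..<t} \<subseteq> V"
    using assms(2,3) by auto
  show "\<forall>i<t. \<forall>j<t. i \<noteq> j \<longrightarrow> (E (ps ! i) (ps ! j) \<longleftrightarrow> path_graph i j)"
    using assms(1,3) unfolding induced_path_def by auto
qed

lemma rtranclp_exits_set:
  assumes "R\<^sup>*\<^sup>* x y" and "x \<in> T" and "y \<notin> T"
  shows "\<exists>u v. R u v \<and> u \<in> T \<and> v \<notin> T"
  using assms by (induction rule: rtranclp_induct) auto

locale greedy_construction =
  fixes V :: "'a set" and E :: "'a \<Rightarrow> 'a \<Rightarrow> bool" and a :: 'a
    and S :: "nat \<Rightarrow> 'a set" and n :: nat
  assumes simple: "simple_graph V E" and a_in_V: "a \<in> V" and S_1: "S 1 = {a}"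
    and step: "\<And>i. 1 \<le> i \<Longrightarrow> i < n \<Longrightarrow> constr_step V E (S i) (S (Suc i))"
begin

lemma a_in_S_subset_V:
  assumes "1 \<le> k" and "k \<le> n"
  shows "a \<in> S k \<and> S k \<subseteq> V"
  using assms
proof (induction k rule: nat_induct_at_least)
  case base
  then show ?case
    using S_1 a_in_V by simp
next
  case (Suc k)
  then have "constr_step V E (S k) (S (Suc k))" and "a \<in> S k" and "S k \<subseteq> V"
    using step by simp_all
  with nbhd_subset[OF simple, of "S k"] show ?case
    using constr_step_subset constr_step_subset_nbhd by blast
qed

lemma card_S:
  assumes noK4: "\<not> has_induced V E 4 complete_graph"
    and noSDK: "\<not> has_induced V E (2 * s + 1) (sdk_graph s)"
    and "1 \<le> k" and "k \<le> n"
  shows "card (S k) \<le> (1 + ramsey 4 (ramsey 4 s)) ^ (k - 1)"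
  using \<open>1 \<le> k\<close> \<open>k \<le> n\<close>
proof (induction k rule: nat_induct_at_least)
  case base
  then show ?case
    using S_1 by simp
next
  case (Suc k)
  have "card (S (Suc k)) \<le> card (S k) * (1 + ramsey 4 (ramsey 4 s))"
    using constr_step_card[OF simple noK4 noSDK] step a_in_S_subset_V Suc by simp
  also have "\<dots> \<le> (1 + ramsey 4 (ramsey 4 s)) ^ (k - 1) * (1 + ramsey 4 (ramsey 4 s))"
    using Suc by (intro mult_right_mono) simp_all
  also have "\<dots> = (1 + ramsey 4 (ramsey 4 s)) ^ (Suc k - 1)"
    using \<open>1 \<le> k\<close> by (simp add: power_eq_if)
  finally show ?case .
qed

lemma induced_path_to_outside:
  assumes "1 \<le> k" and "k \<le> n"
    and "u \<in> V - (nbhd E (S k) \<union> S k)" and "y \<in> nbhd E (S k)" and "E u y"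
  shows "\<exists>qs. induced_path E (qs @ [y, u]) \<and> length qs = k \<and> set qs \<subseteq> S k"
  using assms
proof (induction k arbitrary: u y rule: nat_induct_at_least)
  case base
  note sym = simple_graph_sym[OF simple] and irr = simple_graph_irrefl[OF simple]
  have "E a y" and "\<not> E a u" and "u \<noteq> a"
    using base S_1 unfolding nbhd_def by auto
  have "induced_path E ([a] @ [y])"
    using \<open>E a y\<close> irr by (intro induced_path_snoc[OF sym induced_path_singleton]) auto
  then have "induced_path E ([a, y] @ [u])"
    using \<open>E u y\<close> \<open>\<not> E a u\<close> \<open>u \<noteq> a\<close> irr sym
    by (intro induced_path_snoc) auto
  then show ?case
    using S_1 by (intro exI[of _ "[a]"]) simp
next
  case (Suc k)
  note sym = simple_graph_sym[OF simple] and irr = simple_graph_irrefl[OF simple]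
  have cs: "constr_step V E (S k) (S (Suc k))"
    using Suc step by simp
  have S_mono: "S k \<subseteq> S (Suc k)"
    using constr_step_subset[OF cs] .
  have u_far: "\<not> E v u" if "v \<in> S (Suc k)" for v
    using Suc.prems(2) that unfolding nbhd_def by blast
  then have "y \<notin> S (Suc k)"
    using sym[OF \<open>E u y\<close>] by blast
  \<comment> \<open>otherwise the cover chosen for \<open>S k\<close> would already give \<open>u\<close> a neighbour in \<open>S (Suc k)\<close>\<close>
  have "y \<notin> nbhd E (S k)"
  proof
    assume "y \<in> nbhd E (S k)"
    moreover have "u \<in> V - (nbhd E (S k) \<union> S k)"
      using Suc.prems(2) S_mono nbhd_mono[OF S_mono] by blast
    ultimately obtain x where "x \<in> S (Suc k)" and "E u x"
      using constr_step_dominates[OF cs sym] \<open>E u y\<close> by blast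
    with u_far sym show False
      by blast
  qed
  obtain z where "z \<in> S (Suc k)" and "E z y"
    using Suc.prems(3) unfolding nbhd_def by blast
  with \<open>y \<notin> nbhd E (S k)\<close> have "z \<in> nbhd E (S k)"
    using constr_step_subset_nbhd[OF cs] unfolding nbhd_def by blast
  moreover have "y \<in> V - (nbhd E (S k) \<union> S k)"
    using \<open>y \<notin> nbhd E (S k)\<close> \<open>y \<notin> S (Suc k)\<close> S_mono simple_graph_edge_in[OF simple \<open>E u y\<close>]
    by blast
  ultimately obtain qs where qs: "induced_path E (qs @ [z, y])" "length qs = k" "set qs \<subseteq> S k"
    using Suc.IH[of y z] Suc.prems(1) sym[OF \<open>E z y\<close>] by auto
  have "induced_path E ((qs @ [z, y]) @ [u])"
  proof (rule induced_path_snoc[OF sym qs(1)])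
    show "u \<notin> set (qs @ [z, y])" and "\<forall>v\<in>set (qs @ [z, y]). E v u \<longleftrightarrow> v = last (qs @ [z, y])"
      using qs(3) S_mono u_far \<open>z \<in> S (Suc k)\<close> \<open>y \<notin> S (Suc k)\<close> sym[OF \<open>E u y\<close>] irr
        Suc.prems(2) by auto
  qed simp_all
  then show ?case
    using qs(2,3) S_mono \<open>z \<in> S (Suc k)\<close> by (intro exI[of _ "qs @ [z]"]) auto
qed

lemma dominating:
  assumes "connected_graph V E" and noP: "\<not> has_induced V E (Suc n) path_graph" and "1 \<le> n"
  shows "V - (S n \<union> nbhd E (S n)) = {}"
proof (rule ccontr)
  define T where "T = S n \<union> nbhd E (S n)"
  assume "V - (S n \<union> nbhd E (S n)) \<noteq> {}"
  then obtain w where "w \<in> V" and "w \<notin> T"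
    unfolding T_def by blast
  have "a \<in> S n" and "S n \<subseteq> V"
    using a_in_S_subset_V[OF \<open>1 \<le> n\<close> order_refl] by auto
  then have "(\<lambda>u v. E u v \<and> u \<in> V \<and> v \<in> V)\<^sup>*\<^sup>* a w"
    using assms(1) \<open>w \<in> V\<close> a_in_V unfolding connected_graph_def by blast
  then obtain x v where "E x v" and "x \<in> T" and "v \<notin> T"
    using rtranclp_exits_set[of _ a w T] \<open>a \<in> S n\<close> \<open>w \<notin> T\<close> unfolding T_def by blast
  then have "x \<in> nbhd E (S n)" and "v \<in> V - (nbhd E (S n) \<union> S n)"
    using simple_graph_edge_in[OF simple] unfolding T_def nbhd_def by blast+
  then obtain qs where "induced_path E (qs @ [x, v])" "length qs = n" "set qs \<subseteq> S n"
    using induced_path_to_outside[OF \<open>1 \<le> n\<close> order_refl] simple_graph_sym[OF simple \<open>E x v\<close>]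
    by blast
  moreover have "set (qs @ [x, v]) \<subseteq> V"
    using \<open>set qs \<subseteq> S n\<close> \<open>S n \<subseteq> V\<close> simple_graph_edge_in[OF simple \<open>E x v\<close>] by auto
  ultimately have "has_induced V E (Suc n) path_graph"
    by (intro induced_path_has_induced) auto
  with noP show False ..
qed

end

theorem lemma3p3:
  fixes V :: "'a set" and E :: "'a \<Rightarrow> 'a \<Rightarrow> bool" and s t :: nat and a :: 'a
    and S :: "nat \<Rightarrow> 'a set"
  assumes "1 \<le> s" and "2 \<le> t"
    and "simple_graph V E" and "connected_graph V E" and "P_SDK_K4_free s t V E"
    and "a \<in> V"
    and "S 1 = {a}"
    and "\<And>i. 1 \<le> i \<Longrightarrow> i \<le> t - 2 \<Longrightarrow> constr_step V E (S i) (S (Suc i))"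
  shows "card (S (t - 1)) \<le> (1 + ramsey 4 (ramsey 4 s)) ^ (t - 2)
     \<and> V - (S (t - 1) \<union> nbhd E (S (t - 1))) = {}"
proof -
  interpret greedy_construction V E a S "t - 1"
    using assms(3,6,7,8) by unfold_locales auto
  have noP: "\<not> has_induced V E (Suc (t - 1)) path_graph"
    and noSDK: "\<not> has_induced V E (2 * s + 1) (sdk_graph s)"
    and noK4: "\<not> has_induced V E 4 complete_graph"
    using assms(2,5) unfolding P_SDK_K4_free_def by auto
  have "1 \<le> t - 1" and "t - 1 - 1 = t - 2"
    using assms(2) by simp_all
  with card_S[OF noK4 noSDK \<open>1 \<le> t - 1\<close> order_refl] dominating[OF assms(4) noP]
  show ?thesis
    by simp
qed

end
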